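(* Assume $g$ satisfies (Hg). Let $a\in(0,1)$, $A\in[a,1)$, $k>1$ and $l\in(1,k)$, and set $$d^*(a;l,A,k)=\frac{1}{(k-l)(1-\frac1l)}\max_{s\in[1-\frac aA,1]}\frac{-g(A(1-s);a)}{As}.$$ Then for every $d>d^*(a;l,A,k)$ there exists $\bar c<0$ such that $\mathcal I_{a,d,k}[\bar c,\Psi_{l,A}](\xi)\le0$ for all $\xi\in\mathbb R$.
   Context: $\mathcal I_{a,d,k}[c,\Phi](\xi):=-c\Phi'(\xi)-d\big(\Phi(\xi-1)-(k+1)\Phi(\xi)+k\Phi(\xi+1)\big)-g(\Phi(\xi);a)$. The ($C^1$) function $\Psi_{l,A}:\mathbb R\to\mathbb R$ is $$\Psi_{l,A}(\xi)=\begin{cases}A\big(1-l-\frac{\log l}{3}\big), & \xi\le-1-\frac1l,\\ A\,p_l(\xi), & -1-\frac1l<\xi\le-1,\\ A(1-l^{-\xi}), & \xi>-1,\end{cases}\qquad p_l(\xi)=\frac{\log l}{3}\big(l\xi+1+l\big)^3+1-l-\frac{\log l}{3}.$$ A function $g:\mathbb R\times[0,1]\to\mathbb R$, $(u,a)\mapsto g(u;a)$, satisfies (Hg) if it is $C^1$ and for every $a\in(0,1)$: $g(0;a)=g(a;a)=g(1;a)=0$, $g'(0;a)<0$, $g'(1;a)<0$, $g'(a;a)>0$ (where $g'=\partial_u g$), $g(v;a)>0$ for $v\in(-\infty,0)\cup(a,1)$ and $g(v;a)<0$ for $v\in(0,a)\cup(1,\infty)$. *)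

theory Defs
  imports "HOL-Analysis.Analysis"
begin

definition C1_on_strip :: "(real \<Rightarrow> real \<Rightarrow> real) \<Rightarrow> bool" where
  "C1_on_strip g \<longleftrightarrow>
     (\<exists>D :: real \<times> real \<Rightarrow> real \<times> real \<Rightarrow> real.
        (\<forall>p \<in> UNIV \<times> {0..1}.
           ((\<lambda>q. g (fst q) (snd q)) has_derivative D p) (at p within UNIV \<times> {0..1})) \<and>
        continuous_on (UNIV \<times> {0..1}) (\<lambda>p. D p (1, 0)) \<and>
        continuous_on (UNIV \<times> {0..1}) (\<lambda>p. D p (0, 1)))"

definition Hg :: "(real \<Rightarrow> real \<Rightarrow> real) \<Rightarrow> bool" where
  "Hg g \<longleftrightarrow> C1_on_strip g \<and>
     (\<forall>a. 0 < a \<and> a < 1 \<longrightarrow>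
        g 0 a = 0 \<and> g a a = 0 \<and> g 1 a = 0 \<and>
        deriv (\<lambda>u. g u a) 0 < 0 \<and> deriv (\<lambda>u. g u a) 1 < 0 \<and> deriv (\<lambda>u. g u a) a > 0 \<and>
        (\<forall>v. (v < 0 \<or> (a < v \<and> v < 1)) \<longrightarrow> g v a > 0) \<and>
        (\<forall>v. ((0 < v \<and> v < a) \<or> 1 < v) \<longrightarrow> g v a < 0))"

definition I_op :: "(real \<Rightarrow> real \<Rightarrow> real) \<Rightarrow> real \<Rightarrow> real \<Rightarrow> real \<Rightarrow> real \<Rightarrow> (real \<Rightarrow> real) \<Rightarrow> real \<Rightarrow> real" where
  "I_op g a d k c Phi xi =
     - c * deriv Phi xi - d * (Phi (xi - 1) - (k + 1) * Phi xi + k * Phi (xi + 1)) - g (Phi xi) a"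

definition p_poly :: "real \<Rightarrow> real \<Rightarrow> real" where
  "p_poly l xi = ln l / 3 * (l * xi + 1 + l) ^ 3 + 1 - l - ln l / 3"

definition Psi :: "real \<Rightarrow> real \<Rightarrow> real \<Rightarrow> real" where
  "Psi l A xi =
     (if xi \<le> -1 - 1 / l then A * (1 - l - ln l / 3)
      else if xi \<le> -1 then A * p_poly l xi
      else A * (1 - l powr (- xi)))"

text \<open>The paper writes a maximum over s in [1 - a/A, 1]; when A = a the
  quotient is 0/0 at s = 0 and the maximum is of its continuous extension. We take the
  supremum over the half-open interval (1 - a/A, 1], which agrees with that maximum.\<close>
definition dstar :: "(real \<Rightarrow> real \<Rightarrow> real) \<Rightarrow> real \<Rightarrow> real \<Rightarrow> real \<Rightarrow> real \<Rightarrow> real" where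
  "dstar g a l A k =
     1 / ((k - l) * (1 - 1 / l)) *
     (SUP s \<in> {1 - a / A<..1}. - g (A * (1 - s)) a / (A * s))"

end

theory Submission
  imports Defs
begin

text \<open>
  For \<open>\<xi> < 0\<close> the profile \<open>\<Psi>\<close> is negative, so \<open>g(\<Psi>) > 0\<close>, and it suffices that the
  drift \<open>-c\<Psi>'\<close> is dominated by the lattice diffusion
  \<open>d(\<Psi>(\<xi>-1) - (k+1)\<Psi>(\<xi>) + k\<Psi>(\<xi>+1))\<close>: on the cubic piece this follows from the convexity
  of \<open>x \<mapsto> l\<^sup>x\<close>, on \<open>(-1,0)\<close> from the convexity of \<open>\<Psi>\<close> on \<open>(-\<infinity>,-1]\<close>, provided \<open>|c|\<close>
  is small. For \<open>\<xi> \<ge> 0\<close> the exponential \<open>s = l\<^sup>-\<^sup>\<xi>\<close> is an eigenfunction of the lattice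
  operator, the diffusion of \<open>\<Psi>\<close> is \<open>A K s\<close> with \<open>K = (k-l)(1-1/l)\<close>, and
  \<open>I = A s (-c ln l - d K) - g(A(1-s))\<close>. Where \<open>A(1-s) < a\<close> the definition of \<open>d\<^sup>*\<close> gives
  \<open>-g(A(1-s)) \<le> d\<^sup>* K A s\<close>, elsewhere \<open>g(A(1-s)) \<ge> 0\<close>; since \<open>d > d\<^sup>*\<close>, every \<open>c < 0\<close> of
  small modulus works. The supremum defining \<open>d\<^sup>*\<close> is finite because \<open>g(\<cdot>;a)\<close> is
  differentiable at \<open>a\<close>, where it vanishes.
\<close>

lemma has_real_derivative_glue:
  fixes F fl fr :: "real \<Rightarrow> real"
  assumes fl: "(fl has_real_derivative D) (at b)" and fr: "(fr has_real_derivative D) (at b)"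
    and "0 < e"
    and left: "\<And>y. b - e < y \<Longrightarrow> y \<le> b \<Longrightarrow> F y = fl y"
    and right: "\<And>y. b \<le> y \<Longrightarrow> y < b + e \<Longrightarrow> F y = fr y"
  shows "(F has_real_derivative D) (at b)"
proof -
  have "((\<lambda>y. (fl y - fl b) / (y - b)) \<longlongrightarrow> D) (at_left b)"
    using fl unfolding has_field_derivative_iff by (rule tendsto_mono[OF at_le, rotated]) auto
  moreover have "eventually (\<lambda>y. (fl y - fl b) / (y - b) = (F y - F b) / (y - b)) (at_left b)"
    using eventually_at_left_real[of "b - e" b] \<open>0 < e\<close>
    by (auto elim!: eventually_mono simp: left)
  moreover have "((\<lambda>y. (fr y - fr b) / (y - b)) \<longlongrightarrow> D) (at_right b)"
    using fr unfolding has_field_derivative_iff by (rule tendsto_mono[OF at_le, rotated]) auto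
  moreover have "eventually (\<lambda>y. (fr y - fr b) / (y - b) = (F y - F b) / (y - b)) (at_right b)"
    using eventually_at_right_real[of b "b + e"] \<open>0 < e\<close>
    by (auto elim!: eventually_mono simp: right)
  ultimately show ?thesis
    unfolding has_field_derivative_iff filterlim_at_split by (auto intro: Lim_transform_eventually)
qed

definition Psi' :: "real \<Rightarrow> real \<Rightarrow> real \<Rightarrow> real" where
  "Psi' l A xi =
     (if xi \<le> -1 - 1 / l then 0
      else if xi \<le> -1 then A * (ln l * l * (l * xi + 1 + l) ^ 2)
      else A * (ln l * l powr (- xi)))"

lemma Psi_left: "xi \<le> -1 - 1 / l \<Longrightarrow> Psi l A xi = A * (1 - l - ln l / 3)"
  by (simp add: Psi_def)

lemma Psi_middle: "-1 - 1 / l < xi \<Longrightarrow> xi \<le> -1 \<Longrightarrow> Psi l A xi = A * p_poly l xi"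
  by (simp add: Psi_def)

lemma Psi_right:
  assumes "1 < l" "-1 \<le> xi"
  shows "Psi l A xi = A * (1 - l powr (- xi))"
proof (cases "xi = -1")
  case True
  then show ?thesis using assms by (simp add: Psi_def p_poly_def)
next
  case False
  have "-1 - 1 / l < -1" using assms by simp
  then have "\<not> xi \<le> -1 - 1 / l" "\<not> xi \<le> -1" using False assms by linarith+
  then show ?thesis by (simp add: Psi_def)
qed

lemma Psi'_right:
  assumes "1 < l" "-1 < xi"
  shows "Psi' l A xi = A * (ln l * l powr (- xi))"
proof -
  have "0 < 1 / l" using assms by simp
  then have "\<not> xi \<le> -1 - 1 / l" "\<not> xi \<le> -1" using assms by linarith+
  then show ?thesis by (simp add: Psi'_def)
qed

lemma has_real_derivative_Psi:
  assumes "1 < l"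
  shows "(Psi l A has_real_derivative Psi' l A xi) (at xi)"
proof -
  define f0 f1 f2 where "f0 = (\<lambda>x::real. A * (1 - l - ln l / 3))"
    and "f1 = (\<lambda>x. A * p_poly l x)" and "f2 = (\<lambda>x. A * (1 - l powr (- x)))"
  have d0: "(f0 has_real_derivative 0) (at x)" for x
    unfolding f0_def by simp
  have d1: "(f1 has_real_derivative A * (ln l * l * (l * x + 1 + l) ^ 2)) (at x)" for x
    unfolding f1_def p_poly_def by (auto intro!: derivative_eq_intros simp: power2_eq_square)
  have d2: "(f2 has_real_derivative A * (ln l * l powr (- x))) (at x)" for x
    unfolding f2_def by (auto intro!: derivative_eq_intros)
  have l: "0 < 1 / l" "-1 - 1 / l < -1" using assms by auto
  consider "xi < -1 - 1 / l" | "xi = -1 - 1 / l" | "-1 - 1 / l < xi" "xi < -1"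
    | "xi = -1" | "-1 < xi" by linarith
  then show ?thesis
  proof cases
    case 1
    then show ?thesis
      using has_field_derivative_transform_within_open[OF d0, of "{..< -1 - 1 / l}"]
      by (simp add: Psi'_def f0_def Psi_left)
  next
    case 2
    have t0: "l * xi + 1 + l = 0" using 2 assms by (simp add: field_simps)
    have "Psi l A y = f1 y" if "xi \<le> y" "y < xi + 1 / l" for y
    proof (cases "y = xi")
      case True
      then show ?thesis using 2 t0 by (simp add: Psi_left f1_def p_poly_def)
    next
      case False
      then show ?thesis using that 2 by (simp add: Psi_middle f1_def)
    qed
    with 2 l t0 show ?thesis
      using has_real_derivative_glue[OF d0 _ \<open>0 < 1 / l\<close>, of f1 xi "Psi l A"] d1[of xi]
      by (auto simp: Psi'_def f0_def Psi_left)
  next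
    case 3
    then show ?thesis
      using has_field_derivative_transform_within_open[OF d1, of "{-1 - 1 / l <..< -1}"]
      by (simp add: Psi'_def f1_def Psi_middle)
  next
    case 4
    with l show ?thesis
      using has_real_derivative_glue[OF _ d2 \<open>0 < 1 / l\<close>, of f1 xi "Psi l A"] d1[of xi]
      by (auto simp: Psi'_def f1_def f2_def Psi_middle Psi_right[OF assms])
  next
    case 5
    then show ?thesis
      using has_field_derivative_transform_within_open[OF d2, of "{-1 <..}"]
      by (simp add: Psi'_right[OF assms] f2_def Psi_right[OF assms])
  qed
qed

lemma deriv_Psi: "1 < l \<Longrightarrow> deriv (Psi l A) xi = Psi' l A xi"
  by (rule DERIV_imp_deriv[OF has_real_derivative_Psi])

lemma powr_le_chord:
  fixes l e :: real
  assumes "0 < l" "0 \<le> e" "e \<le> 1"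
  shows "l powr e \<le> 1 + e * (l - 1)"
proof -
  have "exp ((1 - e) *\<^sub>R 0 + e *\<^sub>R ln l) \<le> (1 - e) * exp 0 + e * exp (ln l)"
    by (rule convex_onD[OF exp_convex]) (use assms in auto)
  then show ?thesis using assms by (simp add: powr_def algebra_simps)
qed

lemma powr_ge_tangent:
  fixes l u :: real
  assumes "0 < l"
  shows "1 + u * ln l \<le> l powr u"
  using exp_ge_add_one_self[of "u * ln l"] assms by (simp add: powr_def)

lemma Psi_middle_arg_bounds:
  fixes l xi :: real
  assumes "1 < l" "-1 - 1 / l < xi" "xi \<le> -1"
  shows "0 < l * xi + 1 + l" "l * xi + 1 + l \<le> 1"
proof -
  show "0 < l * xi + 1 + l" using assms by (simp add: field_simps)
  have "l * xi \<le> l * (-1)" using assms by (intro mult_left_mono) auto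
  then show "l * xi + 1 + l \<le> 1" by simp
qed

lemma Psi_ge_Psi_left:
  assumes "1 < l" "0 < A"
  shows "A * (1 - l - ln l / 3) \<le> Psi l A xi"
proof -
  consider "xi \<le> -1 - 1 / l" | "-1 - 1 / l < xi" "xi \<le> -1" | "-1 < xi" by linarith
  then show ?thesis
  proof cases
    case 1
    then show ?thesis by (simp add: Psi_left)
  next
    case 2
    have "0 \<le> ln l / 3 * (l * xi + 1 + l) ^ 3"
      using Psi_middle_arg_bounds[OF assms(1) 2] assms by simp
    then show ?thesis using 2 assms by (simp add: Psi_middle p_poly_def)
  next
    case 3
    have "l powr (- xi) < l powr 1" using 3 assms by (intro powr_less_mono) auto
    then have "l powr (- xi) < l" using assms by simp
    moreover have "0 < ln l" using assms by simp
    ultimately have "1 - l - ln l / 3 \<le> 1 - l powr (- xi)" by linarith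
    then show ?thesis using 3 assms by (simp add: Psi_right)
  qed
qed

lemma Psi_neg:
  assumes "1 < l" "0 < A" "xi < 0"
  shows "Psi l A xi < 0"
proof -
  consider "xi \<le> -1 - 1 / l" | "-1 - 1 / l < xi" "xi \<le> -1" | "-1 < xi" by linarith
  then show ?thesis
  proof cases
    case 1
    have "0 < ln l" using assms by simp
    then have "1 - l - ln l / 3 < 0" using assms by linarith
    then show ?thesis using 1 assms by (simp add: Psi_left mult_pos_neg)
  next
    case 2
    define t where "t = l * xi + 1 + l"
    have "0 < t" "t \<le> 1" using Psi_middle_arg_bounds[OF assms(1) 2] by (simp_all add: t_def)
    then have "t ^ 3 \<le> 1" by (simp add: power_le_one)
    moreover have "0 < ln l" using assms by simp
    ultimately have "ln l / 3 * t ^ 3 \<le> ln l / 3" by (intro mult_left_le) auto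
    then have "p_poly l xi < 0" using assms unfolding p_poly_def t_def by linarith
    then show ?thesis using 2 assms by (simp add: Psi_middle mult_pos_neg)
  next
    case 3
    have "l powr 0 < l powr (- xi)" using assms by (intro powr_less_mono) auto
    then show ?thesis using 3 assms by (simp add: Psi_right mult_pos_neg)
  qed
qed

text \<open>On \<open>(-\<infinity>, -1]\<close> the profile is convex, so it lies above its tangent at \<open>-1\<close>.\<close>
lemma Psi_ge_tangent_at_minus_one:
  assumes "1 < l" "0 < A" "y \<le> -1"
  shows "A * (1 - l) + A * (ln l * l * (y + 1)) \<le> Psi l A y"
proof -
  have L: "0 < ln l" using assms by simp
  consider "y \<le> -1 - 1 / l" | "-1 - 1 / l < y" by linarith
  then show ?thesis
  proof cases
    case 1
    then have "l * (y + 1) \<le> -1" using assms by (simp add: field_simps)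
    then have "ln l * (l * (y + 1)) \<le> ln l * (-1)" using L by (intro mult_left_mono) auto
    then have "1 - l + ln l * l * (y + 1) \<le> 1 - l - ln l / 3" using L by (simp add: algebra_simps)
    then show ?thesis using 1 assms by (simp add: Psi_left flip: distrib_left)
  next
    case 2
    define t where "t = l * y + 1 + l"
    have "0 < t" using Psi_middle_arg_bounds[OF assms(1) 2 assms(3)] by (simp add: t_def)
    have "0 \<le> (t - 1) ^ 2 * (t + 2)" using \<open>0 < t\<close> by simp
    then have "3 * (t - 1) \<le> t ^ 3 - 1" by (simp add: power2_eq_square power3_eq_cube algebra_simps)
    then have "ln l * (3 * (t - 1)) \<le> ln l * (t ^ 3 - 1)" using L by (intro mult_left_mono) auto
    then have "1 - l + ln l * l * (y + 1) \<le> p_poly l y"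
      by (simp add: p_poly_def t_def algebra_simps)
    then show ?thesis using 2 assms by (simp add: Psi_middle flip: distrib_left)
  qed
qed

definition lattice_diffusion :: "real \<Rightarrow> (real \<Rightarrow> real) \<Rightarrow> real \<Rightarrow> real" where
  "lattice_diffusion k Phi xi = Phi (xi - 1) - (k + 1) * Phi xi + k * Phi (xi + 1)"

lemma I_op_eq: "I_op g a d k c Phi xi = - c * deriv Phi xi - d * lattice_diffusion k Phi xi - g (Phi xi) a"
  by (simp add: I_op_def lattice_diffusion_def)

lemma lattice_diffusion_Psi_left:
  assumes "0 \<le> k" "1 < l" "0 < A" "xi \<le> -1 - 1 / l"
  shows "0 \<le> lattice_diffusion k (Psi l A) xi"
proof -
  have "Psi l A (xi - 1) = Psi l A xi" using assms by (simp add: Psi_left)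
  moreover have "k * Psi l A xi \<le> k * Psi l A (xi + 1)"
    using assms Psi_ge_Psi_left[OF assms(2,3)] by (intro mult_left_mono) (simp_all add: Psi_left)
  ultimately show ?thesis by (simp add: lattice_diffusion_def algebra_simps)
qed

lemma lattice_diffusion_Psi_middle:
  assumes "1 \<le> k" "1 < l" "0 < A" "-1 - 1 / l < xi" "xi \<le> -1"
  shows "2 / 3 * (A * ((l - 1) * (l * xi + 1 + l))) \<le> lattice_diffusion k (Psi l A) xi"
proof -
  define t L E where "t = l * xi + 1 + l" and "L = ln l" and "E = l powr (- (xi + 1))"
  have t: "0 < t" "t \<le> 1" using Psi_middle_arg_bounds[OF assms(2,4,5)] by (simp_all add: t_def)
  have L: "0 < L" "L \<le> l - 1" using assms ln_le_minus_one[of l] by (simp_all add: L_def)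
  have e: "- (xi + 1) = (1 - t) / l" using assms by (simp add: t_def field_simps)
  have "(1 - t) * 1 \<le> (1 - t) * l" using t assms by (intro mult_left_mono) auto
  then have "(1 - t) / l \<le> 1 - t" using assms by (simp add: divide_le_eq)
  then have "(1 - t) / l * (l - 1) \<le> (1 - t) * (l - 1)" using assms by (intro mult_right_mono) auto
  moreover have "E \<le> 1 + (1 - t) / l * (l - 1)"
    unfolding E_def e using t assms by (intro powr_le_chord) auto
  ultimately have lE: "(l - 1) * t \<le> l - E" by (simp add: algebra_simps)
  have "0 \<le> (l - 1) * t" using assms t by simp
  then have "(l - 1) * t * 1 \<le> (l - E) * k"
    using lE assms by (intro mult_mono) auto
  then have q1: "(l - 1) * t \<le> k * (l - E)" by (simp add: mult.commute)
  have "t ^ 3 \<le> 1" using t by (simp add: power_le_one)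
  then have q2: "0 \<le> k * (L / 3) * (1 - t ^ 3)" using assms L by simp
  have "t ^ 3 \<le> t" using t power_decreasing[of 1 3 t] by simp
  then have "L * t ^ 3 \<le> (l - 1) * t" using L t by (intro mult_mono) auto
  then have q3: "L / 3 * t ^ 3 \<le> (l - 1) * t / 3" by simp
  have Q: "2 / 3 * ((l - 1) * t) \<le> k * (l - E) + k * (L / 3) * (1 - t ^ 3) - L / 3 * t ^ 3"
    using q1 q2 q3 by linarith
  have "1 / l \<le> 1" using assms by simp
  then have Pm: "Psi l A (xi - 1) = A * (1 - l - L / 3)"
    unfolding L_def using assms by (intro Psi_left) linarith
  have Pz: "Psi l A xi = A * (L / 3 * t ^ 3 + 1 - l - L / 3)"
    using assms by (simp add: Psi_middle p_poly_def t_def L_def)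
  have Pp: "Psi l A (xi + 1) = A * (1 - E)"
    unfolding E_def using assms \<open>1 / l \<le> 1\<close> by (intro Psi_right) linarith+
  have "lattice_diffusion k (Psi l A) xi
      = A * (k * (l - E) + k * (L / 3) * (1 - t ^ 3) - L / 3 * t ^ 3)"
    unfolding lattice_diffusion_def Pm Pz Pp by (simp add: field_simps)
  with Q assms show ?thesis unfolding t_def by simp
qed

lemma lattice_diffusion_Psi_right:
  assumes "1 < l" "0 < A" "-1 < xi" "xi < 0"
  shows "A * ((k - l) * (1 - 1 / l)) * l powr (- xi) \<le> lattice_diffusion k (Psi l A) xi"
proof -
  define P L where "P = l powr (- xi)" and "L = ln l"
  have P: "1 - xi * L \<le> P"
    using powr_ge_tangent[of l "- xi"] assms by (simp add: P_def L_def)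
  have Pm: "A * (1 - l) + A * (L * l * xi) \<le> Psi l A (xi - 1)"
    using Psi_ge_tangent_at_minus_one[OF assms(1,2), of "xi - 1"] assms by (simp add: L_def)
  have Pz: "Psi l A xi = A * (1 - P)"
    unfolding P_def using assms by (intro Psi_right) auto
  have "l powr (- (xi + 1)) = P / l"
    unfolding P_def using assms by (simp add: powr_diff flip: powr_minus_divide)
  then have Pp: "Psi l A (xi + 1) = A * (1 - P / l)"
    using assms Psi_right[OF assms(1), of "xi + 1" A] by simp
  have "lattice_diffusion k (Psi l A) xi - A * ((k - l) * (1 - 1 / l)) * P
      = (Psi l A (xi - 1) - (A * (1 - l) + A * (L * l * xi))) + A * l * (P - 1 + xi * L)"
    unfolding lattice_diffusion_def Pz Pp using assms by (simp add: field_simps)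
  moreover have "0 \<le> A * l * (P - 1 + xi * L)" using P assms by simp
  ultimately show ?thesis using Pm by (simp add: P_def)
qed

lemma lattice_diffusion_Psi_nonneg:
  assumes "1 < l" "0 \<le> xi"
  shows "lattice_diffusion k (Psi l A) xi = A * ((k - l) * (1 - 1 / l)) * l powr (- xi)"
proof -
  define s where "s = l powr (- xi)"
  have "l powr (- (xi - 1)) = l powr 1 * l powr (- xi)"
    using powr_add[of l 1 "- xi"] by simp
  moreover have "l powr (- (xi + 1)) = l powr (- xi) / l powr 1"
    using powr_diff[of l "- xi" 1] by simp
  ultimately have "l powr (- (xi - 1)) = l * s" "l powr (- (xi + 1)) = s / l"
    using assms by (simp_all add: s_def)
  then have Pm: "Psi l A (xi - 1) = A * (1 - l * s)" and Pz: "Psi l A xi = A * (1 - s)"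
    and Pp: "Psi l A (xi + 1) = A * (1 - s / l)"
    using assms Psi_right[OF assms(1)] by (simp_all add: s_def)
  show ?thesis
    unfolding lattice_diffusion_def Pm Pz Pp s_def[symmetric] using assms by (simp add: field_simps)
qed

lemma Psi_drift_le_diffusion:
  assumes "1 \<le> k" "1 < l" "0 < A" "c \<le> 0"
    and drift_poly: "- c * l \<le> 2 * d / 3"
    and drift_exp: "- c * ln l \<le> d * ((k - l) * (1 - 1 / l))"
    and "xi < 0"
  shows "- c * Psi' l A xi \<le> d * lattice_diffusion k (Psi l A) xi"
proof -
  have "0 \<le> - c * l" using assms by (intro mult_nonneg_nonneg) auto
  then have "0 \<le> d" using drift_poly by linarith
  consider "xi \<le> -1 - 1 / l" | "-1 - 1 / l < xi" "xi \<le> -1" | "-1 < xi" by linarith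
  then show ?thesis
  proof cases
    case 1
    then show ?thesis
      using lattice_diffusion_Psi_left[of k l A xi] assms \<open>0 \<le> d\<close> by (simp add: Psi'_def)
  next
    case 2
    define t where "t = l * xi + 1 + l"
    have t: "0 < t" "t \<le> 1" using Psi_middle_arg_bounds[OF assms(2) 2] by (simp_all add: t_def)
    have "t ^ 2 \<le> t" using t power_decreasing[of 1 2 t] by simp
    then have "ln l * t ^ 2 \<le> (l - 1) * t"
      using t assms ln_le_minus_one[of l] by (intro mult_mono) auto
    moreover have "0 \<le> - c * l * A" using \<open>0 \<le> - c * l\<close> assms by (intro mult_nonneg_nonneg) auto
    ultimately have "- c * l * A * (ln l * t ^ 2) \<le> - c * l * A * ((l - 1) * t)"
      by (rule mult_left_mono)
    moreover have "Psi' l A xi = A * (ln l * l * t ^ 2)" using 2 by (simp add: Psi'_def t_def)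
    ultimately have "- c * Psi' l A xi \<le> (- c * l) * (A * ((l - 1) * t))"
      by (simp add: algebra_simps)
    also have "\<dots> \<le> 2 * d / 3 * (A * ((l - 1) * t))"
      using drift_poly t assms by (intro mult_right_mono) auto
    also have "\<dots> \<le> d * lattice_diffusion k (Psi l A) xi"
      using mult_left_mono[OF lattice_diffusion_Psi_middle[OF assms(1-3) 2] \<open>0 \<le> d\<close>]
      unfolding t_def by argo
    finally show ?thesis .
  next
    case 3
    define P where "P = l powr (- xi)"
    have "0 < A * P" using assms by (simp add: P_def)
    have "- c * Psi' l A xi = (- c * ln l) * (A * P)"
      using 3 assms by (simp add: Psi'_right P_def)
    also have "\<dots> \<le> d * (A * ((k - l) * (1 - 1 / l)) * P)"
      using mult_right_mono[OF drift_exp, of "A * P"] \<open>0 < A * P\<close> by argo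
    also have "\<dots> \<le> d * lattice_diffusion k (Psi l A) xi"
      using lattice_diffusion_Psi_right[OF assms(2,3) 3 assms(7), of k] \<open>0 \<le> d\<close>
      by (simp add: P_def mult_left_mono)
    finally show ?thesis .
  qed
qed

lemma I_op_Psi_nonpos:
  fixes g :: "real \<Rightarrow> real \<Rightarrow> real"
  assumes g_nonneg: "\<And>v. v < 0 \<Longrightarrow> 0 \<le> g v a"
    and g_profile: "\<And>s. 0 < s \<Longrightarrow> s \<le> 1 \<Longrightarrow> - g (A * (1 - s)) a \<le> M * (A * s)"
    and "1 \<le> k" "1 < l" "0 < A" "0 \<le> M" "c \<le> 0"
    and drift_poly: "- c * l \<le> 2 * d / 3"
    and drift_exp: "- c * ln l + M \<le> d * ((k - l) * (1 - 1 / l))"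
  shows "I_op g a d k c (Psi l A) xi \<le> 0"
proof (cases "xi < 0")
  case True
  have "- c * Psi' l A xi \<le> d * lattice_diffusion k (Psi l A) xi"
    using assms True by (intro Psi_drift_le_diffusion) auto
  moreover have "0 \<le> g (Psi l A xi) a" using assms True by (intro g_nonneg Psi_neg)
  ultimately show ?thesis using assms by (simp add: I_op_eq deriv_Psi)
next
  case False
  define s where "s = l powr (- xi)"
  have "0 < s" using assms by (simp add: s_def)
  have "s \<le> l powr 0" unfolding s_def using False assms by (intro powr_mono) auto
  then have "s \<le> 1" using assms by simp
  have "I_op g a d k c (Psi l A) xi
      = A * s * (- c * ln l - d * ((k - l) * (1 - 1 / l))) - g (A * (1 - s)) a"
    using False assms
    by (simp add: I_op_eq deriv_Psi Psi'_right lattice_diffusion_Psi_nonneg Psi_right s_def algebra_simps)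
  also have "\<dots> \<le> A * s * (- c * ln l - d * ((k - l) * (1 - 1 / l))) + M * (A * s)"
    using g_profile[OF \<open>0 < s\<close> \<open>s \<le> 1\<close>] by simp
  also have "\<dots> = A * s * (- c * ln l + M - d * ((k - l) * (1 - 1 / l)))"
    by (simp add: algebra_simps)
  also have "\<dots> \<le> 0"
    using drift_exp \<open>0 < s\<close> assms by (intro mult_nonneg_nonpos) auto
  finally show ?thesis .
qed

lemma C1_on_strip_differentiable_first:
  assumes "C1_on_strip g" "0 \<le> a" "a \<le> 1"
  shows "(\<lambda>u. g u a) differentiable (at u)"
proof -
  obtain D where D: "\<forall>p \<in> UNIV \<times> {0..1}.
      ((\<lambda>q. g (fst q) (snd q)) has_derivative D p) (at p within UNIV \<times> {0..1})"
    using assms(1) unfolding C1_on_strip_def by blast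
  have "((\<lambda>x. g (fst (x, a)) (snd (x, a))) has_derivative (\<lambda>h. D (u, a) (h, 0))) (at u)"
  proof (rule has_derivative_in_compose2[where t = "UNIV \<times> {0..1}"])
    show "((\<lambda>x. (x, a)) has_derivative (\<lambda>h. (h, 0))) (at u)"
      by (rule has_derivative_Pair[OF has_derivative_ident has_derivative_const])
  qed (use D assms in auto)
  then show ?thesis unfolding differentiable_def by auto
qed

lemma difference_quotient_bdd_above:
  fixes f :: "real \<Rightarrow> real"
  assumes cont: "continuous_on {x0..b} f" and diff: "f differentiable (at b)"
  shows "bdd_above ((\<lambda>v. (f v - f b) / (v - b)) ` {x0..<b})"
proof -
  obtain D where D: "(f has_real_derivative D) (at b)"
    using diff real_differentiable_def by blast
  define H where "H v = (if v = b then D else (f v - f b) / (v - b))" for v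
  have "continuous (at v within {x0..b}) H" if v: "v \<in> {x0..b}" for v
  proof (cases "v = b")
    case True
    have "((\<lambda>y. (f y - f b) / (y - b)) \<longlongrightarrow> D) (at b within {x0..b})"
      using has_field_derivative_at_within[OF D] unfolding has_field_derivative_iff .
    then have "(H \<longlongrightarrow> D) (at b within {x0..b})"
      by (rule Lim_transform_eventually) (auto simp: eventually_at_filter H_def)
    then show ?thesis using True by (simp add: continuous_within H_def)
  next
    case False
    have "continuous (at v within {x0..b}) (\<lambda>y. (f y - f b) / (y - b))"
      using cont v False
      by (intro continuous_intros) (auto simp: continuous_on_eq_continuous_within)
    then show ?thesis
      by (rule continuous_transform_within[where \<delta> = "dist v b"]) (use False v in \<open>auto simp: H_def dist_commute\<close>)
  qed
  then have "compact (H ` {x0..b})"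
    by (intro compact_continuous_image) (simp_all add: continuous_on_eq_continuous_within)
  then have "bdd_above (H ` {x0..b})" by (intro bounded_imp_bdd_above compact_imp_bounded)
  moreover have "(\<lambda>v. (f v - f b) / (v - b)) ` {x0..<b} = H ` {x0..<b}"
    by (rule image_cong) (auto simp: H_def)
  ultimately show ?thesis by (auto elim: bdd_above_mono)
qed

lemma Hg_profile_quotient_bdd_above:
  assumes "Hg g" "0 < a" "a < 1" "a \<le> A"
  shows "bdd_above ((\<lambda>s. - g (A * (1 - s)) a / (A * s)) ` {1 - a / A<..1})"
proof -
  have g0: "g 0 a = 0" and ga: "g a a = 0" and g_neg: "\<And>v. 0 < v \<Longrightarrow> v < a \<Longrightarrow> g v a < 0"
    and "C1_on_strip g"
    using assms unfolding Hg_def by auto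
  then have diff: "(\<lambda>u. g u a) differentiable (at u)" for u
    using assms by (intro C1_on_strip_differentiable_first) auto
  then have "continuous_on {0..a} (\<lambda>u. g u a)"
    by (intro continuous_at_imp_continuous_on ballI differentiable_imp_continuous_within)
  then have "bdd_above ((\<lambda>v. (g v a - g a a) / (v - a)) ` {0..<a})"
    by (rule difference_quotient_bdd_above[OF _ diff])
  then obtain B where B: "\<forall>v \<in> {0..<a}. (g v a - g a a) / (v - a) \<le> B"
    by (auto simp: bdd_above_def)
  show ?thesis
  proof (rule bdd_aboveI2)
    fix s assume s: "s \<in> {1 - a / A<..1}"
    define v where "v = A * (1 - s)"
    have "A * (1 - a / A) < A * s" using s assms by (intro mult_strict_left_mono) auto
    then have "v < a" using assms by (simp add: v_def algebra_simps)
    moreover have "0 \<le> v" using s assms by (simp add: v_def)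
    ultimately have "g v a \<le> 0" using g0 g_neg by (cases "v = 0") (auto intro: less_imp_le)
    have "a - v \<le> A * s" using assms by (simp add: v_def algebra_simps)
    then have "- g v a / (A * s) \<le> - g v a / (a - v)"
      using \<open>v < a\<close> \<open>g v a \<le> 0\<close> by (intro divide_left_mono) auto
    also have "\<dots> = (g v a - g a a) / (v - a)"
      using ga \<open>v < a\<close> by (simp add: divide_simps) (simp add: algebra_simps)
    also have "\<dots> \<le> B" using B \<open>0 \<le> v\<close> \<open>v < a\<close> by simp
    finally show "- g (A * (1 - s)) a / (A * s) \<le> B" by (simp add: v_def)
  qed
qed

lemma Hg_profile_bound:
  assumes "Hg g" "0 < a" "a < 1" "a \<le> A" "A < 1"
  defines "M \<equiv> (SUP s \<in> {1 - a / A<..1}. - g (A * (1 - s)) a / (A * s))"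
  shows "0 \<le> M" and "\<And>s. 0 < s \<Longrightarrow> s \<le> 1 \<Longrightarrow> - g (A * (1 - s)) a \<le> M * (A * s)"
proof -
  have g0: "g 0 a = 0" and ga: "g a a = 0" and g_pos: "\<And>v. a < v \<Longrightarrow> v < 1 \<Longrightarrow> 0 < g v a"
    using assms unfolding Hg_def by auto
  have upper: "- g (A * (1 - s)) a / (A * s) \<le> M" if "s \<in> {1 - a / A<..1}" for s
    unfolding M_def using that Hg_profile_quotient_bdd_above[OF assms(1-4)] by (rule cSUP_upper)
  have "1 \<in> {1 - a / A<..1}" using assms by simp
  from upper[OF this] show "0 \<le> M" using g0 by simp
  fix s :: real assume s: "0 < s" "s \<le> 1"
  have "0 < A * s" using s assms by simp
  show "- g (A * (1 - s)) a \<le> M * (A * s)"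
  proof (cases "1 - a / A < s")
    case True
    have "- g (A * (1 - s)) a / (A * s) \<le> M" using upper True s by simp
    then show ?thesis by (simp only: pos_divide_le_eq[OF \<open>0 < A * s\<close>])
  next
    case False
    then have "A * s \<le> A * (1 - a / A)" using assms by (intro mult_left_mono) auto
    then have "a \<le> A * (1 - s)" using assms by (simp add: algebra_simps)
    moreover have "A * (1 - s) < 1" using assms \<open>0 < A * s\<close> by (simp add: algebra_simps)
    ultimately have "0 \<le> g (A * (1 - s)) a"
      using ga g_pos by (cases "A * (1 - s) = a") (auto intro: less_imp_le)
    moreover have "0 \<le> M * (A * s)" using \<open>0 \<le> M\<close> \<open>0 < A * s\<close> by simp
    ultimately show ?thesis by linarith
  qed
qed

theorem lemma6p2:
  fixes g :: "real \<Rightarrow> real \<Rightarrow> real" and a A k l d :: real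
  assumes "Hg g"
    and "0 < a" and "a < 1"
    and "a \<le> A" and "A < 1"
    and "1 < k"
    and "1 < l" and "l < k"
    and "d > dstar g a l A k"
  shows "\<exists>c < 0. \<forall>xi. I_op g a d k c (Psi l A) xi \<le> 0"
proof -
  define K M where "K = (k - l) * (1 - 1 / l)"
    and "M = (SUP s \<in> {1 - a / A<..1}. - g (A * (1 - s)) a / (A * s))"
  have "0 < K" using assms by (simp add: K_def)
  note M = Hg_profile_bound[OF assms(1-5), folded M_def]
  have "M < d * K" using assms(9) \<open>0 < K\<close> by (simp add: dstar_def K_def M_def field_simps)
  then have "0 < d * K" using M(1) by linarith
  then have "0 < d" using \<open>0 < K\<close> by (simp add: zero_less_mult_iff)
  define \<epsilon> where "\<epsilon> = min ((d * K - M) / ln l) (2 * d / (3 * l))"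
  have "0 < \<epsilon>" using \<open>M < d * K\<close> \<open>0 < d\<close> assms by (simp add: \<epsilon>_def)
  have "\<epsilon> * l \<le> 2 * d / 3" and "\<epsilon> * ln l + M \<le> d * K"
    using assms by (auto simp: \<epsilon>_def min_def field_simps)
  have "I_op g a d k (- \<epsilon>) (Psi l A) xi \<le> 0" for xi
  proof (rule I_op_Psi_nonpos[where M = M])
    show "0 \<le> g v a" if "v < 0" for v using assms that unfolding Hg_def by (auto intro: less_imp_le)
  qed (use assms M \<open>0 < \<epsilon>\<close> \<open>\<epsilon> * l \<le> 2 * d / 3\<close> \<open>\<epsilon> * ln l + M \<le> d * K\<close> in \<open>auto simp: K_def\<close>)
  then show ?thesis using \<open>0 < \<epsilon>\<close> by (intro exI[of _ "- \<epsilon>"]) auto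
qed

end
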